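(* Let $q'>0$, $e'\in(0,1)$, $q_{\max}>0$, $\mathcal D_5=\{(e,\omega):0\le e\le1,\ 0\le\omega\le\pi\}$, $\mathcal D_6=\{(q,\omega'):0<q\le q_{\max},\ 0\le\omega'\le\pi/2\}$. For each $(q,\omega')\in\mathcal D_6$, $$\min_{(e,\omega)\in\mathcal D_5}\delta_{\rm nod}=\max\{0,\ \ell^{\omega'}_{\rm ext}\},\qquad \max_{(e,\omega)\in\mathcal D_5}\delta_{\rm nod}=\max\{u^{\omega'}_{\rm link},\ u^{\omega'}_{\rm ext}\},$$ where $\ell^{\omega'}_{\rm ext}(q,\omega')=q-\frac{p'}{1-e'\cos\omega'}$, $u^{\omega'}_{\rm link}(q,\omega')=\frac{p'}{1-e'\cos\omega'}-q$, and $$u^{\omega'}_{\rm ext}(q,\omega')=\frac{2q}{1+\cos\omega_*}-\frac{p'}{1+e'\cos\omega'},\qquad \cos\omega_*=\frac{p'e'\cos\omega'}{\sqrt{q^2(1-e'^2\cos^2\omega')^2+(p'e'\cos\omega')^2}+q(1-e'^2\cos^2\omega')}.$$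
   Context: For $q>0$, $e\in[0,1]$ and angles $\omega,\omega'$, define $r_{\pm}=\frac{q(1+e)}{1\pm e\cos\omega}$, $r'_{\pm}=\frac{q'(1+e')}{1\pm e'\cos\omega'}$ (extended-real value $+\infty$ allowed when a denominator vanishes), $d^+=r'_+-r_+$, $d^-=r'_--r_-$, and the nodal distance $\delta_{\rm nod}=\min\{|d^+|,|d^-|\}$. $p'=q'(1+e')$. *)

theory Defs
  imports Complex_Main "HOL-Library.Extended_Real"
begin

definition r_plus :: "real \<Rightarrow> real \<Rightarrow> real \<Rightarrow> ereal" where
  "r_plus q e w = (if 1 + e * cos w = 0 then PInfty else ereal (q * (1 + e) / (1 + e * cos w)))"

definition r_minus :: "real \<Rightarrow> real \<Rightarrow> real \<Rightarrow> ereal" where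
  "r_minus q e w = (if 1 - e * cos w = 0 then PInfty else ereal (q * (1 + e) / (1 - e * cos w)))"

definition d_plus :: "real \<Rightarrow> real \<Rightarrow> real \<Rightarrow> real \<Rightarrow> real \<Rightarrow> real \<Rightarrow> ereal" where
  "d_plus q e w q' e' w' = r_plus q' e' w' - r_plus q e w"

definition d_minus :: "real \<Rightarrow> real \<Rightarrow> real \<Rightarrow> real \<Rightarrow> real \<Rightarrow> real \<Rightarrow> ereal" where
  "d_minus q e w q' e' w' = r_minus q' e' w' - r_minus q e w"

definition delta_nod :: "real \<Rightarrow> real \<Rightarrow> real \<Rightarrow> real \<Rightarrow> real \<Rightarrow> real \<Rightarrow> ereal" where
  "delta_nod q e w q' e' w' = min \<bar>d_plus q e w q' e' w'\<bar> \<bar>d_minus q e w q' e' w'\<bar>"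

definition l_ext :: "real \<Rightarrow> real \<Rightarrow> real \<Rightarrow> real \<Rightarrow> real" where
  "l_ext q' e' q w' = q - q' * (1 + e') / (1 - e' * cos w')"

definition u_link :: "real \<Rightarrow> real \<Rightarrow> real \<Rightarrow> real \<Rightarrow> real" where
  "u_link q' e' q w' = q' * (1 + e') / (1 - e' * cos w') - q"

definition cos_omega_star :: "real \<Rightarrow> real \<Rightarrow> real \<Rightarrow> real \<Rightarrow> real" where
  "cos_omega_star q' e' q w' =
     (let p' = q' * (1 + e'); c = cos w' in
      p' * e' * c / (sqrt (q\<^sup>2 * (1 - e'\<^sup>2 * c\<^sup>2)\<^sup>2 + (p' * e' * c)\<^sup>2) + q * (1 - e'\<^sup>2 * c\<^sup>2)))"

definition u_ext :: "real \<Rightarrow> real \<Rightarrow> real \<Rightarrow> real \<Rightarrow> real" where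
  "u_ext q' e' q w' = 2 * q / (1 + cos_omega_star q' e' q w') - q' * (1 + e') / (1 + e' * cos w')"

end

theory Submission
  imports Defs
begin

text \<open>Every nodal radius \<open>r\<^sub>\<plusminus>\<close> of the first orbit is at least \<open>q\<close>, and for fixed \<open>\<omega>\<close> it is
  largest on the parabola \<open>e = 1\<close>. Hence \<open>\<delta>\<^sub>n\<^sub>o\<^sub>d \<ge> q - r'\<^sub>-\<close>, with equality for the circle
  \<open>e = 0\<close> when \<open>r'\<^sub>- \<le> q\<close>, and otherwise \<open>\<delta>\<^sub>n\<^sub>o\<^sub>d = 0\<close> for a parabola through the node at
  distance \<open>r'\<^sub>-\<close>. For the maximum, \<open>\<omega>\<^sub>*\<close> is the argument at which the parabola is equally far
  from both nodes of the second orbit; on the arc \<open>cos \<omega> \<ge> cos \<omega>\<^sub>*\<close> the distance \<open>|d\<^sup>+|\<close>, and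
  on the other arc \<open>|d\<^sup>-|\<close>, is bounded by \<open>max (r'\<^sub>- - q) u\<^sub>e\<^sub>x\<^sub>t\<close>, which the parabola attains
  at \<open>\<omega> = \<pi>\<close> or at \<open>\<omega> = \<omega>\<^sub>*\<close>.\<close>

lemma r_minus_eq_r_plus_reflect: "r_minus q e w = r_plus q e (pi - w)"
  by (simp add: r_minus_def r_plus_def)

lemma r_plus_circle [simp]: "r_plus q 0 w = ereal q"
  by (simp add: r_plus_def)

lemma r_minus_circle [simp]: "r_minus q 0 w = ereal q"
  by (simp add: r_minus_def)

lemma r_plus_parabola:
  assumes "cos w \<noteq> -1"
  shows "r_plus q 1 w = ereal (2 * q / (1 + cos w))"
  using assms by (simp add: r_plus_def add_eq_0_iff)

lemma r_minus_parabola: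
  assumes "cos w \<noteq> 1"
  shows "r_minus q 1 w = ereal (2 * q / (1 - cos w))"
  using assms by (simp add: r_minus_def)

lemma r_plus_parabola_pi [simp]: "r_plus q 1 pi = PInfty"
  by (simp add: r_plus_def)

lemma r_plus_ge_pericentre:
  assumes "0 \<le> q" "0 \<le> e" "e \<le> 1"
  shows "ereal q \<le> r_plus q e w"
proof (cases "1 + e * cos w = 0")
  case False
  have "\<bar>e * cos w\<bar> \<le> e"
    using assms abs_cos_le_one[of w] by (simp add: abs_mult mult_left_le)
  then have "0 < 1 + e * cos w" "1 + e * cos w \<le> 1 + e"
    using False assms(3) by (auto simp: abs_le_iff)
  then have "q \<le> q * (1 + e) / (1 + e * cos w)"
    using assms by (simp add: le_divide_eq mult_left_mono)
  then show ?thesis using False by (simp add: r_plus_def)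
qed (simp add: r_plus_def)

lemma r_minus_ge_pericentre:
  assumes "0 \<le> q" "0 \<le> e" "e \<le> 1"
  shows "ereal q \<le> r_minus q e w"
  unfolding r_minus_eq_r_plus_reflect using assms by (rule r_plus_ge_pericentre)

text \<open>On the arc where \<open>cos w \<ge> t\<close>, the radius is dominated by that of the parabola
  (\<open>e = 1\<close>) through the endpoint \<open>cos w = t\<close>.\<close>
lemma r_plus_le_parabola:
  assumes "0 \<le> q" "0 \<le> e" "e \<le> 1" "-1 < t" "t \<le> cos w"
  shows "r_plus q e w \<le> ereal (2 * q / (1 + t))"
proof -
  have "cos w \<le> 1" by simp
  then have "0 \<le> (1 - cos w) * (1 - e)" using assms by simp
  then have "(1 + e) * (1 + cos w) \<le> 2 * (1 + e * cos w)" by (simp add: algebra_simps)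
  then have "q * ((1 + e) * (1 + cos w)) \<le> q * (2 * (1 + e * cos w))"
    using assms by (intro mult_left_mono) auto
  moreover have pos: "0 < 1 + e * cos w"
  proof (cases "cos w \<le> 0")
    case True
    then have "e * - cos w \<le> - cos w" using assms by (intro mult_left_le_one_le) auto
    then show ?thesis using assms by linarith
  next
    case False
    then show ?thesis using assms by (simp add: add_pos_nonneg)
  qed
  ultimately have "q * (1 + e) / (1 + e * cos w) \<le> 2 * q / (1 + cos w)"
    using assms by (simp add: divide_simps algebra_simps)
  also have "\<dots> \<le> 2 * q / (1 + t)"
    using assms by (intro divide_left_mono) auto
  finally show ?thesis using pos by (simp add: r_plus_def)
qed

lemma abs_ereal_minus_ge:
  assumes "ereal q \<le> r"
  shows "ereal (q - a) \<le> \<bar>ereal a - r\<bar>"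
  using assms by (cases r) auto

lemma abs_ereal_minus_le:
  assumes "ereal q \<le> r" "r \<le> ereal U"
  shows "\<bar>ereal a - r\<bar> \<le> ereal (max (a - q) (U - a))"
proof (cases r)
  case (real x)
  then have "\<bar>a - x\<bar> \<le> max (a - q) (U - a)" using assms by auto
  then show ?thesis using real by (auto simp: max_def)
qed (use assms in auto)

text \<open>\<open>s\<close> is the root in \<open>[0,1)\<close> of \<open>K s\<^sup>2 + 2 q D s - K = 0\<close>, written with a rationalised
  numerator; that quadratic is the identity below with denominators cleared.\<close>
lemma balancing_root:
  fixes q D K :: real
  assumes "0 < q" "0 < D" "0 \<le> K"
  defines "s \<equiv> K / (sqrt (q\<^sup>2 * D\<^sup>2 + K\<^sup>2) + q * D)"
  shows "0 \<le> s" "s < 1" "2 * q / (1 - s) - 2 * q / (1 + s) = 2 * K / D"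
proof -
  define R where "R = sqrt (q\<^sup>2 * D\<^sup>2 + K\<^sup>2)"
  have qD: "0 < q * D" using assms by simp
  have "q * D \<le> R" "K \<le> R" unfolding R_def
    by (rule real_le_rsqrt, simp add: power_mult_distrib)+
  then have RqD: "0 < R + q * D" using qD by linarith
  show s0: "0 \<le> s" unfolding s_def R_def[symmetric] using assms RqD by simp
  show s1: "s < 1" unfolding s_def R_def[symmetric] using \<open>K \<le> R\<close> qD RqD by (simp add: divide_simps)
  have sK: "s * (R + q * D) = K" unfolding s_def R_def[symmetric] using RqD by simp
  have "R\<^sup>2 = q\<^sup>2 * D\<^sup>2 + K\<^sup>2" unfolding R_def by simp
  then have "(R - q * D) * (R + q * D) = K * (s * (R + q * D))"
    using sK by (simp add: algebra_simps power2_eq_square)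
  then have "(s * K) * (R + q * D) = (R - q * D) * (R + q * D)" by (simp add: algebra_simps)
  then have sK': "s * K = R - q * D" using RqD by simp
  have "s\<^sup>2 * (R + q * D) = s * (s * (R + q * D))" by (simp add: power2_eq_square)
  also have "\<dots> = R - q * D" using sK sK' by simp
  finally have quad: "(R + q * D) * (1 - s\<^sup>2) = 2 * q * D" by (simp add: algebra_simps)
  have "s\<^sup>2 < 1" using s0 s1 by (simp add: power_less_one_iff abs_square_less_1)
  then have "2 * q / (1 - s) - 2 * q / (1 + s) = 4 * q * s / (1 - s\<^sup>2)"
    using s0 s1 by (simp add: divide_simps power2_eq_square) (simp add: algebra_simps)
  also have "\<dots> = 4 * q * s * (R + q * D) / (2 * q * D)"
    using RqD by (simp flip: quad)
  also have "\<dots> = 2 * K / D"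
    using sK assms by (simp add: divide_simps)
  finally show "2 * q / (1 - s) - 2 * q / (1 + s) = 2 * K / D" .
qed

context
  fixes q q' e' w' A B :: real
  assumes q_pos: "0 < q"
    and target_plus: "r_plus q' e' w' = ereal A"
    and target_minus: "r_minus q' e' w' = ereal B"
begin

lemma delta_nod_ge:
  assumes "A \<le> B" "0 \<le> e" "e \<le> 1"
  shows "ereal (max 0 (q - B)) \<le> delta_nod q e w q' e' w'"
proof -
  have "ereal (q - A) \<le> \<bar>d_plus q e w q' e' w'\<bar>"
    unfolding d_plus_def target_plus
    using q_pos assms by (intro abs_ereal_minus_ge r_plus_ge_pericentre) auto
  moreover have "ereal (q - B) \<le> \<bar>d_minus q e w q' e' w'\<bar>"
    unfolding d_minus_def target_minus
    using q_pos assms by (intro abs_ereal_minus_ge r_minus_ge_pericentre) auto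
  ultimately show ?thesis
    using \<open>A \<le> B\<close> by (auto simp: delta_nod_def simp flip: zero_ereal_def intro: order_trans[rotated])
qed

lemma delta_nod_attains_lower:
  assumes "A \<le> B"
  shows "\<exists>e w. 0 \<le> e \<and> e \<le> 1 \<and> 0 \<le> w \<and> w \<le> pi \<and> ereal (max 0 (q - B)) = delta_nod q e w q' e' w'"
proof (cases "B \<le> q")
  case True
  have "delta_nod q 0 0 q' e' w' = ereal (q - B)"
    using True assms by (simp add: delta_nod_def d_plus_def d_minus_def target_plus target_minus min_def)
  then show ?thesis using True by force
next
  case False
  define w where "w = arccos (1 - 2 * q / B)"
  have "-1 \<le> 1 - 2 * q / B" "1 - 2 * q / B \<le> 1" using False q_pos by (simp_all add: divide_simps)
  then have w: "cos w = 1 - 2 * q / B" "0 \<le> w" "w \<le> pi"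
    unfolding w_def using arccos_bounded by auto
  have "r_minus q 1 w = ereal B"
    using w(1) False q_pos by (simp add: r_minus_parabola)
  then have "delta_nod q 1 w q' e' w' = 0"
    by (simp add: delta_nod_def d_minus_def target_minus min_absorb2)
  then show ?thesis using w False by (intro exI[of _ 1] exI[of _ w]) (simp add: zero_ereal_def)
qed

context
  fixes s u :: real
  assumes s_nonneg: "0 \<le> s" and s_less_1: "s < 1"
    and balance_plus: "2 * q / (1 + s) - A = u"
    and balance_minus: "2 * q / (1 - s) - B = u"
begin

lemma target_le: "A \<le> B"
proof -
  have "2 * q / (1 + s) \<le> 2 * q / (1 - s)"
    using q_pos s_nonneg s_less_1 by (intro divide_left_mono) auto
  then show ?thesis using balance_plus balance_minus by linarith
qed

lemma balance_ge: "2 * q - B \<le> u"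
proof -
  have "2 * q \<le> 2 * q / (1 - s)"
    using q_pos s_nonneg s_less_1 by (simp add: le_divide_eq)
  then show ?thesis using balance_minus by linarith
qed

text \<open>Split the nodal circle at \<open>cos w = s\<close>: on one arc \<open>r\<^sub>+\<close> stays below the balancing
  parabola's value \<open>2q/(1+s)\<close>, on the other \<open>r\<^sub>-\<close> stays below \<open>2q/(1-s)\<close>.\<close>
lemma delta_nod_le:
  assumes "0 \<le> e" "e \<le> 1"
  shows "delta_nod q e w q' e' w' \<le> ereal (max (B - q) u)"
proof (cases "s \<le> cos w")
  case True
  have "\<bar>d_plus q e w q' e' w'\<bar> \<le> ereal (max (A - q) (2 * q / (1 + s) - A))"
    unfolding d_plus_def target_plus using assms q_pos s_nonneg True
    by (intro abs_ereal_minus_le r_plus_ge_pericentre r_plus_le_parabola) auto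
  also have "\<dots> \<le> ereal (max (B - q) u)"
    using target_le balance_plus by (auto simp: max_def)
  finally show ?thesis by (simp add: delta_nod_def min_le_iff_disj)
next
  case False
  have "r_minus q e w \<le> ereal (2 * q / (1 + - s))"
    unfolding r_minus_eq_r_plus_reflect using assms q_pos s_less_1 False
    by (intro r_plus_le_parabola) auto
  then have "\<bar>d_minus q e w q' e' w'\<bar> \<le> ereal (max (B - q) (2 * q / (1 - s) - B))"
    unfolding d_minus_def target_minus using assms q_pos
    by (intro abs_ereal_minus_le r_minus_ge_pericentre) auto
  then show ?thesis using balance_minus by (simp add: delta_nod_def min_le_iff_disj)
qed

lemma delta_nod_attains_upper:
  "\<exists>e w. 0 \<le> e \<and> e \<le> 1 \<and> 0 \<le> w \<and> w \<le> pi \<and> ereal (max (B - q) u) = delta_nod q e w q' e' w'"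
proof (cases "u \<le> B - q")
  case True
  then have "q \<le> B" using balance_ge q_pos by linarith
  then have "delta_nod q 1 pi q' e' w' = ereal (B - q)"
    by (simp add: delta_nod_def d_plus_def d_minus_def target_plus target_minus r_minus_parabola)
  then show ?thesis using True by (intro exI[of _ 1] exI[of _ pi]) simp
next
  case False
  define w where "w = arccos s"
  have w: "cos w = s" "0 \<le> w" "w \<le> pi"
    unfolding w_def using s_nonneg s_less_1 arccos_bounded by auto
  have "0 \<le> u" using False balance_ge q_pos by linarith
  moreover have "d_plus q 1 w q' e' w' = ereal (- u)" "d_minus q 1 w q' e' w' = ereal (- u)"
    using w s_nonneg s_less_1 balance_plus balance_minus
    by (simp_all add: d_plus_def d_minus_def target_plus target_minus r_plus_parabola r_minus_parabola)
  ultimately have "delta_nod q 1 w q' e' w' = ereal u" by (simp add: delta_nod_def)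
  then show ?thesis using False w by (intro exI[of _ 1] exI[of _ w]) simp
qed

end

end

lemma cos_omega_star_balances:
  fixes q q' e' w' :: real
  assumes "0 < q" "0 \<le> q'" "0 \<le> e'" "0 \<le> e' * cos w'" "e' * cos w' < 1"
  defines "s \<equiv> cos_omega_star q' e' q w'"
  shows "0 \<le> s" "s < 1"
    "2 * q / (1 - s) - q' * (1 + e') / (1 - e' * cos w') = u_ext q' e' q w'"
proof -
  define c where "c = cos w'"
  define K where "K = q' * (1 + e') * e' * c"
  have ec: "0 \<le> e' * c" "e' * c < 1" using assms by (simp_all add: c_def)
  have "(e' * c)\<^sup>2 < 1" using ec by (simp add: abs_square_less_1)
  then have "0 < 1 - e'\<^sup>2 * c\<^sup>2" by (simp add: power_mult_distrib)
  moreover have "0 \<le> K" unfolding K_def using ec assms by (simp add: mult.assoc)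
  ultimately have "0 \<le> s" "s < 1"
    and gap: "2 * q / (1 - s) - 2 * q / (1 + s) = 2 * K / (1 - e'\<^sup>2 * c\<^sup>2)"
    using balancing_root[OF \<open>0 < q\<close>]
    unfolding s_def cos_omega_star_def Let_def K_def c_def[symmetric] by blast+
  then show "0 \<le> s" "s < 1" by simp_all
  have "1 - e'\<^sup>2 * c\<^sup>2 = (1 - e' * c) * (1 + e' * c)" by (simp add: algebra_simps power2_eq_square)
  then have "q' * (1 + e') / (1 - e' * c) - q' * (1 + e') / (1 + e' * c) = 2 * K / (1 - e'\<^sup>2 * c\<^sup>2)"
    using ec unfolding K_def by (simp add: field_simps)
  with gap show "2 * q / (1 - s) - q' * (1 + e') / (1 - e' * cos w') = u_ext q' e' q w'"
    unfolding u_ext_def s_def[symmetric] c_def[symmetric] by linarith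
qed

theorem proposition5:
  fixes q' e' q_max q w' :: real
  assumes "q' > 0" and "0 < e'" and "e' < 1" and "q_max > 0"
    and "0 < q" and "q \<le> q_max" and "0 \<le> w'" and "w' \<le> pi / 2"
  shows "ereal (max 0 (l_ext q' e' q w')) \<in> {delta_nod q e w q' e' w' | e w. 0 \<le> e \<and> e \<le> 1 \<and> 0 \<le> w \<and> w \<le> pi}
       \<and> (\<forall>e w. 0 \<le> e \<and> e \<le> 1 \<and> 0 \<le> w \<and> w \<le> pi \<longrightarrow>
            ereal (max 0 (l_ext q' e' q w')) \<le> delta_nod q e w q' e' w')
       \<and> ereal (max (u_link q' e' q w') (u_ext q' e' q w')) \<in> {delta_nod q e w q' e' w' | e w. 0 \<le> e \<and> e \<le> 1 \<and> 0 \<le> w \<and> w \<le> pi}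
       \<and> (\<forall>e w. 0 \<le> e \<and> e \<le> 1 \<and> 0 \<le> w \<and> w \<le> pi \<longrightarrow>
            delta_nod q e w q' e' w' \<le> ereal (max (u_link q' e' q w') (u_ext q' e' q w')))"
proof -
  define c where "c = cos w'"
  define A where "A = q' * (1 + e') / (1 + e' * c)"
  define B where "B = q' * (1 + e') / (1 - e' * c)"
  define s where "s = cos_omega_star q' e' q w'"
  define u where "u = u_ext q' e' q w'"
  have "0 \<le> c" "c \<le> 1" unfolding c_def using assms by (auto intro: cos_ge_zero)
  moreover from \<open>c \<le> 1\<close> have "e' * c \<le> e'" using assms by (simp add: mult_left_le)
  ultimately have ec: "0 \<le> e' * c" "e' * c < 1" using assms by (simp, linarith)
  have target: "r_plus q' e' w' = ereal A" "r_minus q' e' w' = ereal B"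
    using ec by (simp_all add: r_plus_def r_minus_def A_def B_def flip: c_def)
  have balance_plus: "2 * q / (1 + s) - A = u"
    unfolding u_def u_ext_def s_def A_def c_def ..
  have "0 \<le> s" "s < 1" and balance_minus: "2 * q / (1 - s) - B = u"
    using cos_omega_star_balances[of q q' e' w'] assms ec unfolding s_def u_def B_def c_def by simp_all
  have l_ext_eq: "l_ext q' e' q w' = q - B" and u_link_eq: "u_link q' e' q w' = B - q"
    unfolding l_ext_def u_link_def B_def c_def by simp_all
  note hyps = \<open>0 < q\<close> target \<open>0 \<le> s\<close> \<open>s < 1\<close> balance_plus balance_minus
  have "A \<le> B" by (rule target_le[OF hyps])
  then show ?thesis
    unfolding l_ext_eq u_link_eq u_def[symmetric]
    using delta_nod_ge[OF hyps(1-3)] delta_nod_attains_lower[OF hyps(1-3)]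
      delta_nod_le[OF hyps] delta_nod_attains_upper[OF hyps]
    by blast
qed

end
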